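(* Every Steiner triple system on $27$ points of $3$-rank at most $24$ is resolvable.
   Context: A Steiner triple system $STS(v)$ is a pair $(\mathcal{P},\mathcal{B})$ with $|\mathcal{P}|=v$ and $\mathcal{B}$ a set of $3$-subsets (blocks) such that every $2$-subset of $\mathcal{P}$ lies in exactly one block. Its $3$-rank is the rank over $\mathbb{F}_3$ of its block–point incidence matrix. A parallel class is a set of blocks partitioning $\mathcal{P}$; the system is resolvable if $\mathcal{B}$ can be partitioned into parallel classes. *)

theory Defs
  imports Main
begin

definition STS :: "'a set \<Rightarrow> 'a set set \<Rightarrow> bool" where
  "STS P B \<longleftrightarrow> finite P \<and> (\<forall>b\<in>B. b \<subseteq> P \<and> card b = 3) \<and>
     (\<forall>x\<in>P. \<forall>y\<in>P. x \<noteq> y \<longrightarrow> (\<exists>!b. b \<in> B \<and> {x, y} \<subseteq> b))"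

text \<open>A set S of blocks gives F_3-linearly independent rows of the block-point
  incidence matrix: every F_3-linear combination (coefficients taken mod 3)
  of these rows that vanishes has all coefficients zero.\<close>
definition F3_indep_rows :: "'a set \<Rightarrow> 'a set set \<Rightarrow> bool" where
  "F3_indep_rows P S \<longleftrightarrow>
     (\<forall>c :: 'a set \<Rightarrow> int.
        (\<forall>p\<in>P. (\<Sum>b\<in>{b\<in>S. p \<in> b}. c b) mod 3 = 0) \<longrightarrow> (\<forall>b\<in>S. c b mod 3 = 0))"

text \<open>The 3-rank: rank over F_3 of the incidence matrix, i.e. the maximal number
  of F_3-linearly independent rows.\<close>
definition rank3 :: "'a set \<Rightarrow> 'a set set \<Rightarrow> nat" where
  "rank3 P B = Max {card S | S. S \<subseteq> B \<and> F3_indep_rows P S}"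

definition parallel_class :: "'a set \<Rightarrow> 'a set set \<Rightarrow> 'a set set \<Rightarrow> bool" where
  "parallel_class P B C \<longleftrightarrow> C \<subseteq> B \<and> (\<forall>p\<in>P. \<exists>!c. c \<in> C \<and> p \<in> c)"

definition resolvable :: "'a set \<Rightarrow> 'a set set \<Rightarrow> bool" where
  "resolvable P B \<longleftrightarrow> (\<exists>Q. (\<forall>C\<in>Q. parallel_class P B C) \<and> (\<forall>b\<in>B. \<exists>!C. C \<in> Q \<and> b \<in> C))"

end

(*
  A function h from the points to the field with three elements whose sum over every block vanishes
  is either constant or takes each value on exactly a third of the points: for a \<noteq> b, sending
  (p, q) to (p, third point of the block through p and q) injects h\<inverse>(a) \<times> h\<inverse>(b) into
  h\<inverse>(a) \<times> h\<inverse>(-a-b).  If the 3-rank is at most 24, these functions form a space with at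
  least 3^3 elements, so there are two of them, f and g, that are independent modulo constants.
  Then p \<mapsto> (f p, g p) maps the 27 points onto the affine plane AG(2,3) with fibres of size 3;
  the fibres are blocks and form one parallel class.  Every other block is mapped bijectively onto
  a line of AG(2,3), and the blocks over a fixed line form a Latin square of order 3 on its nine
  points, whose blocks split into three parallel classes.  Gluing these over the three parallel
  lines of each of the four directions gives twelve further parallel classes.
*)
theory Submission
  imports Defs "HOL-Library.Numeral_Type" "HOL-Library.FuncSet" "HOL-Library.Disjoint_Sets"
begin

section \<open>The field with three elements and the affine plane over it\<close>

lemma card_filter_eq_sum:
  "finite A \<Longrightarrow> card {x \<in> A. Q x} = (\<Sum>x\<in>A. if Q x then 1 else 0)"
  unfolding card_eq_sum by (rule sum.inter_filter)

lemma exhaust_3: "(x::3) = 0 \<or> x = 1 \<or> x = 2"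
proof (cases x rule: bit1_cases)
  case (of_int z)
  then have "z = 0 \<or> z = 1 \<or> z = 2" by auto
  then show ?thesis using of_int by auto
qed

lemma of_int_3_eq_0_iff: "(of_int k :: 3) = 0 \<longleftrightarrow> k mod 3 = 0"
proof -
  have "(of_int k :: 3) = of_int (k mod 3)" by (simp add: bit1.of_int_eq)
  moreover have "k mod 3 = 0 \<or> k mod 3 = 1 \<or> k mod 3 = 2" by auto
  ultimately show ?thesis by auto
qed

lemma surj_of_int_3: "\<exists>k. (of_int k :: 3) = x"
proof -
  have "x = of_int 0 \<or> x = of_int 1 \<or> x = of_int 2" using exhaust_3[of x] by simp
  then show ?thesis by blast
qed

lemma minus_add_self_3: "- ((x::3) + x) = x"
  using exhaust_3[of x] by (elim disjE) auto

lemma minus_add_neq_3: "(a::3) \<noteq> b \<Longrightarrow> - (a + b) \<noteq> a \<and> - (a + b) \<noteq> b"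
  using exhaust_3[of a] exhaust_3[of b] by (elim disjE) auto

lemma eq_or_eq_or_minus_add_3: "(a::3) \<noteq> b \<Longrightarrow> e = a \<or> e = b \<or> e = - (a + b)"
  using exhaust_3[of a] exhaust_3[of b] exhaust_3[of e] by (elim disjE) auto

lemma mult_self_3: "(l::3) \<noteq> 0 \<Longrightarrow> l * l = 1"
  using exhaust_3[of l] by (elim disjE) auto

lemma mult_eq_0_3: "(c::3) * s = 0 \<longleftrightarrow> c = 0 \<or> s = 0"
  using exhaust_3[of c] exhaust_3[of s] by (elim disjE) auto

text \<open>The lines of the affine plane over the field with three elements, in each of its four
  parallel classes, are the level sets of one of the linear forms lin_form d, d \<in> directions.\<close>

definition directions :: "(3 \<times> 3) set" where
  "directions = {(1, 0), (0, 1), (1, 1), (2, 1)}"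

definition lin_form :: "3 \<times> 3 \<Rightarrow> 3 \<times> 3 \<Rightarrow> 3" where
  "lin_form d u = fst d * fst u + snd d * snd u"

lemma directions_nonzero: "d \<in> directions \<Longrightarrow> d \<noteq> (0, 0)"
  unfolding directions_def by auto

lemma finite_directions: "finite directions"
  unfolding directions_def by simp

lemma sum_directions:
  "(\<Sum>d\<in>directions. F d) = F (1, 0) + F (0, 1) + F (1, 1) + (F (2, 1) :: 'b::comm_monoid_add)"
  unfolding directions_def by (simp add: add.assoc)

lemma card_directions_agree:
  "card {d \<in> directions. lin_form d x = lin_form d y} = (if x = y then 4 else 1)"
proof -
  obtain x1 x2 y1 y2 where xy: "x = (x1, x2)" "y = (y1, y2)" by fastforce
  have "card {d \<in> directions. lin_form d x = lin_form d y} =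
      (\<Sum>d\<in>directions. if lin_form d x = lin_form d y then 1 else 0)"
    by (rule card_filter_eq_sum[OF finite_directions])
  also have "\<dots> = (if x = y then 4 else 1)"
    unfolding sum_directions lin_form_def xy
    using exhaust_3[of x1] exhaust_3[of x2] exhaust_3[of y1] exhaust_3[of y2]
    by (elim disjE) simp_all
  finally show ?thesis .
qed

lemma ex1_direction_agree:
  assumes "x \<noteq> y"
  shows "\<exists>!d. d \<in> directions \<and> lin_form d x = lin_form d y"
proof -
  have "card {d \<in> directions. lin_form d x = lin_form d y} = 1"
    using card_directions_agree assms by simp
  then obtain d where "{d \<in> directions. lin_form d x = lin_form d y} = {d}"
    by (rule card_1_singletonE)
  then have "d' \<in> directions \<and> lin_form d' x = lin_form d' y \<longleftrightarrow> d' = d" for d'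
    by blast
  then show ?thesis by simp
qed

definition indexed_resolution :: "'a set \<Rightarrow> 'a set set \<Rightarrow> 'i set \<Rightarrow> ('i \<Rightarrow> 'a set set) \<Rightarrow> bool" where
  "indexed_resolution P B K R \<longleftrightarrow>
     (\<forall>k\<in>K. parallel_class P B (R k)) \<and> (\<forall>b\<in>B. \<exists>!k. k \<in> K \<and> b \<in> R k)"

lemma indexed_resolutionD:
  assumes "indexed_resolution P B K R"
  shows indexed_resolution_parallel_class: "k \<in> K \<Longrightarrow> parallel_class P B (R k)"
    and indexed_resolution_ex1: "b \<in> B \<Longrightarrow> \<exists>!k. k \<in> K \<and> b \<in> R k"
  using assms by (simp_all add: indexed_resolution_def)

lemma parallel_classD:
  assumes "parallel_class P B C"
  shows parallel_class_subset: "C \<subseteq> B"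
    and parallel_class_ex1: "p \<in> P \<Longrightarrow> \<exists>!c. c \<in> C \<and> p \<in> c"
  using assms by (simp_all add: parallel_class_def)

lemma indexed_resolution_imp_resolvable:
  assumes res: "indexed_resolution P B K R"
  shows "resolvable P B"
  unfolding resolvable_def
proof (intro exI[of _ "R ` K"] conjI ballI)
  show "parallel_class P B C" if "C \<in> R ` K" for C
    using that indexed_resolution_parallel_class[OF res] by blast
  show "\<exists>!C. C \<in> R ` K \<and> b \<in> C" if b: "b \<in> B" for b
  proof -
    obtain k where k: "k \<in> K" "b \<in> R k" and uniq: "\<forall>k'. k' \<in> K \<and> b \<in> R k' \<longrightarrow> k' = k"
      using indexed_resolution_ex1[OF res b] by (elim ex1E) blast
    show ?thesis
    proof (rule ex1I[of _ "R k"])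
      fix C assume "C \<in> R ` K \<and> b \<in> C"
      then obtain k' where "k' \<in> K" "C = R k'" "b \<in> R k'" by blast
      then show "C = R k" using uniq by blast
    qed (use k in blast)
  qed
qed

lemma indexed_resolution_reindex:
  assumes res: "indexed_resolution P B K R" and \<sigma>: "bij_betw \<sigma> J K"
  shows "indexed_resolution P B J (R \<circ> \<sigma>)"
  unfolding indexed_resolution_def
proof (intro conjI ballI)
  show "parallel_class P B ((R \<circ> \<sigma>) j)" if "j \<in> J" for j
    using indexed_resolution_parallel_class[OF res] bij_betwE[OF \<sigma>] that by simp
  show "\<exists>!j. j \<in> J \<and> b \<in> (R \<circ> \<sigma>) j" if b: "b \<in> B" for b
  proof -
    obtain k where k: "k \<in> K" "b \<in> R k" and uniq: "\<forall>k'. k' \<in> K \<and> b \<in> R k' \<longrightarrow> k' = k"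
      using indexed_resolution_ex1[OF res b] by (elim ex1E) blast
    obtain j where j: "j \<in> J" "\<sigma> j = k"
      using k(1) \<sigma> unfolding bij_betw_def by blast
    have uniq_j: "j' = j" if "j' \<in> J" "b \<in> R (\<sigma> j')" for j'
    proof -
      have "\<sigma> j' = \<sigma> j" using uniq[rule_format, of "\<sigma> j'"] bij_betwE[OF \<sigma>] that j by simp
      then show ?thesis using \<sigma> j(1) that(1) unfolding bij_betw_def inj_on_def by blast
    qed
    show ?thesis
    proof (rule ex1I[of _ j])
      show "j \<in> J \<and> b \<in> (R \<circ> \<sigma>) j" using j k by simp
    qed (use uniq_j in simp)
  qed
qed

lemma indexed_resolution_UN:
  assumes disj: "disjoint_family_on Q I"
    and res: "\<And>i. i \<in> I \<Longrightarrow> indexed_resolution (Q i) (D i) K (R i)"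
    and blocks: "\<And>i b. i \<in> I \<Longrightarrow> b \<in> D i \<Longrightarrow> b \<noteq> {} \<and> b \<subseteq> Q i"
  shows "indexed_resolution (\<Union>i\<in>I. Q i) (\<Union>i\<in>I. D i) K (\<lambda>k. \<Union>i\<in>I. R i k)"
proof -
  have RD: "R i k \<subseteq> D i" if "i \<in> I" "k \<in> K" for i k
    using parallel_class_subset[OF indexed_resolution_parallel_class[OF res[OF that(1)] that(2)]] .
  have same_piece: "i' = i" if "i \<in> I" "i' \<in> I" "b \<in> D i'" "b \<subseteq> Q i" for i i' b
    using blocks[OF that(2,3)] that disj unfolding disjoint_family_on_def by blast
  have point: "\<exists>!c. c \<in> (\<Union>i\<in>I. R i k) \<and> p \<in> c" if kip: "k \<in> K" "i \<in> I" "p \<in> Q i" for k i p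
  proof -
    obtain c where c: "c \<in> R i k" "p \<in> c" and uniq: "\<forall>c'. c' \<in> R i k \<and> p \<in> c' \<longrightarrow> c' = c"
      using parallel_class_ex1[OF indexed_resolution_parallel_class[OF res[OF kip(2)] kip(1)] kip(3)]
      by (elim ex1E) blast
    have piece: "i' = i" if "i' \<in> I" "c' \<in> R i' k" "p \<in> c'" for i' c'
      using RD[OF that(1) \<open>k \<in> K\<close>] blocks[OF that(1)] that \<open>i \<in> I\<close> \<open>p \<in> Q i\<close> disj
      unfolding disjoint_family_on_def by blast
    show ?thesis
    proof (rule ex1I[of _ c])
      fix c' assume "c' \<in> (\<Union>i\<in>I. R i k) \<and> p \<in> c'"
      then obtain i' where "i' \<in> I" "c' \<in> R i' k" "p \<in> c'" by blast
      then show "c' = c" using piece uniq by blast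
    qed (use c \<open>i \<in> I\<close> in blast)
  qed
  have block: "\<exists>!k. k \<in> K \<and> b \<in> (\<Union>i\<in>I. R i k)" if ib: "i \<in> I" "b \<in> D i" for i b
  proof -
    obtain k where k: "k \<in> K" "b \<in> R i k" and uniq: "\<forall>k'. k' \<in> K \<and> b \<in> R i k' \<longrightarrow> k' = k"
      using indexed_resolution_ex1[OF res[OF ib(1)] ib(2)] by (elim ex1E) blast
    have piece: "i' = i" if "i' \<in> I" "k' \<in> K" "b \<in> R i' k'" for i' k'
      using same_piece[of i i' b] RD[OF that(1,2)] blocks[OF \<open>i \<in> I\<close> \<open>b \<in> D i\<close>] that \<open>i \<in> I\<close>
      by blast
    show ?thesis
    proof (rule ex1I[of _ k])
      fix k' assume "k' \<in> K \<and> b \<in> (\<Union>i\<in>I. R i k')"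
      then obtain i' where "i' \<in> I" "k' \<in> K" "b \<in> R i' k'" by blast
      then show "k' = k" using piece uniq by blast
    qed (use k \<open>i \<in> I\<close> in blast)
  qed
  show ?thesis
    unfolding indexed_resolution_def parallel_class_def
  proof (intro conjI ballI)
    show "(\<Union>i\<in>I. R i k) \<subseteq> (\<Union>i\<in>I. D i)" if "k \<in> K" for k
      by (rule UN_mono[OF subset_refl RD[OF _ that]])
    show "\<exists>!c. c \<in> (\<Union>i\<in>I. R i k) \<and> p \<in> c" if k: "k \<in> K" and p: "p \<in> (\<Union>i\<in>I. Q i)" for k p
    proof -
      obtain i where "i \<in> I" "p \<in> Q i" using p by blast
      then show ?thesis by (rule point[OF k])
    qed
    show "\<exists>!k. k \<in> K \<and> b \<in> (\<Union>i\<in>I. R i k)" if b: "b \<in> (\<Union>i\<in>I. D i)" for b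
    proof -
      obtain i where "i \<in> I" "b \<in> D i" using b by blast
      then show ?thesis by (rule block)
    qed
  qed
qed

lemma resolvable_UN:
  assumes disj: "disjoint_family_on D I" and res: "\<And>i. i \<in> I \<Longrightarrow> resolvable P (D i)"
  shows "resolvable P (\<Union>i\<in>I. D i)"
proof -
  have "\<forall>i\<in>I. \<exists>Qi. (\<forall>C\<in>Qi. parallel_class P (D i) C) \<and> (\<forall>b\<in>D i. \<exists>!C. C \<in> Qi \<and> b \<in> C)"
    using res unfolding resolvable_def by simp
  then obtain Q where Q: "\<And>i C. i \<in> I \<Longrightarrow> C \<in> Q i \<Longrightarrow> parallel_class P (D i) C"
    "\<And>i b. i \<in> I \<Longrightarrow> b \<in> D i \<Longrightarrow> \<exists>!C. C \<in> Q i \<and> b \<in> C"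
    by (metis bchoice)
  have parallel: "parallel_class P (\<Union>i\<in>I. D i) C" if "i \<in> I" "C \<in> Q i" for i C
    using Q(1)[OF that] that(1) unfolding parallel_class_def by blast
  have block: "\<exists>!C. C \<in> (\<Union>i\<in>I. Q i) \<and> b \<in> C" if ib: "i \<in> I" "b \<in> D i" for i b
  proof -
    obtain C where C: "C \<in> Q i" "b \<in> C" and uniq: "\<forall>C'. C' \<in> Q i \<and> b \<in> C' \<longrightarrow> C' = C"
      using Q(2)[OF ib] by (elim ex1E) blast
    have piece: "i' = i" if "i' \<in> I" "C' \<in> Q i'" "b \<in> C'" for i' C'
      using parallel_class_subset[OF Q(1)[OF that(1,2)]] that \<open>i \<in> I\<close> \<open>b \<in> D i\<close> disj
      unfolding disjoint_family_on_def by blast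
    show ?thesis
    proof (rule ex1I[of _ C])
      fix C' assume "C' \<in> (\<Union>i\<in>I. Q i) \<and> b \<in> C'"
      then obtain i' where "i' \<in> I" "C' \<in> Q i'" "b \<in> C'" by blast
      then show "C' = C" using piece uniq by blast
    qed (use C \<open>i \<in> I\<close> in blast)
  qed
  show ?thesis
    unfolding resolvable_def
  proof (intro exI[of _ "\<Union>i\<in>I. Q i"] conjI ballI)
    show "parallel_class P (\<Union>i\<in>I. D i) C" if C: "C \<in> (\<Union>i\<in>I. Q i)" for C
    proof -
      obtain i where "i \<in> I" "C \<in> Q i" using C by blast
      then show ?thesis by (rule parallel)
    qed
    show "\<exists>!C. C \<in> (\<Union>i\<in>I. Q i) \<and> b \<in> C" if b: "b \<in> (\<Union>i\<in>I. D i)" for b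
    proof -
      obtain i where "i \<in> I" "b \<in> D i" using b by blast
      then show ?thesis by (rule block)
    qed
  qed
qed

lemma resolvable_Un:
  assumes "B1 \<inter> B2 = {}" and "resolvable P B1" and "resolvable P B2"
  shows "resolvable P (B1 \<union> B2)"
proof -
  have "resolvable P (\<Union>i\<in>UNIV. if i then B1 else B2)"
    using assms by (intro resolvable_UN) (auto simp: disjoint_family_on_def)
  moreover have "(\<Union>i\<in>UNIV. if i then B1 else B2) = B1 \<union> B2"
    by (auto split: if_splits)
  ultimately show ?thesis by simp
qed

section \<open>Latin squares of order 3\<close>

locale transversal_design_3_3 =
  fixes S :: "'a set" and grp :: "'a \<Rightarrow> 'g" and T :: "'a set set"
  assumes finite_points: "finite S"
    and card_groups: "card (grp ` S) = 3"
    and card_group: "v \<in> grp ` S \<Longrightarrow> card {p \<in> S. grp p = v} = 3"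
    and block_subset: "b \<in> T \<Longrightarrow> b \<subseteq> S"
    and card_block: "b \<in> T \<Longrightarrow> card b = 3"
    and block_transversal: "b \<in> T \<Longrightarrow> inj_on grp b"
    and unique_block: "p \<in> S \<Longrightarrow> q \<in> S \<Longrightarrow> grp p \<noteq> grp q \<Longrightarrow> \<exists>!b. b \<in> T \<and> p \<in> b \<and> q \<in> b"
begin

lemma finite_blocks: "finite T"
  using finite_subset[of T "Pow S"] block_subset finite_points by blast

lemma grp_image_block:
  assumes b: "b \<in> T"
  shows "grp ` b = grp ` S"
proof -
  have "card (grp ` b) = 3"
    using card_image[OF block_transversal[OF b]] card_block[OF b] by simp
  moreover have "grp ` b \<subseteq> grp ` S"
    using block_subset[OF b] by blast
  ultimately show ?thesis
    using card_subset_eq[of "grp ` S" "grp ` b"] finite_points card_groups by simp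
qed

lemma block_meets_group:
  assumes "b \<in> T" "p \<in> S"
  obtains x where "x \<in> b" "grp x = grp p"
proof -
  have "grp p \<in> grp ` b" using grp_image_block[OF assms(1)] assms(2) by simp
  then obtain x where "x \<in> b" "grp p = grp x" by (rule imageE)
  then show ?thesis using that by simp
qed

lemma eq_if_same_group: "b \<in> T \<Longrightarrow> x \<in> b \<Longrightarrow> y \<in> b \<Longrightarrow> grp x = grp y \<Longrightarrow> x = y"
  using block_transversal unfolding inj_on_def by blast

lemma block_through:
  assumes "p \<in> S" "q \<in> S" "grp p \<noteq> grp q"
  obtains b where "b \<in> T" "p \<in> b" "q \<in> b"
  using unique_block[OF assms] by blast

lemma block_eq:
  assumes "b \<in> T" "b' \<in> T" "p \<in> b" "q \<in> b" "p \<in> b'" "q \<in> b'" "grp p \<noteq> grp q"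
  shows "b = b'"
proof -
  have "p \<in> S" "q \<in> S" using assms block_subset by auto
  from unique_block[OF this assms(7)] obtain c
    where "\<forall>c'. c' \<in> T \<and> p \<in> c' \<and> q \<in> c' \<longrightarrow> c' = c"
    by (elim ex1E) blast
  then show ?thesis using assms by blast
qed

lemma card_blocks_through:
  assumes a: "a \<in> S"
  shows "card {b \<in> T. a \<in> b} = 3"
proof -
  have "grp ` S \<noteq> {grp a}" using card_groups by force
  then obtain v where v: "v \<in> grp ` S" "v \<noteq> grp a" using a by blast
  define G where "G = {q \<in> S. grp q = v}"
  define F where "F q = (THE b. b \<in> T \<and> a \<in> b \<and> q \<in> b)" for q
  have F: "F q \<in> T" "a \<in> F q" "q \<in> F q" if q: "q \<in> G" for q
  proof -
    have "\<exists>!b. b \<in> T \<and> a \<in> b \<and> q \<in> b"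
      using unique_block[OF a] q v unfolding G_def by simp
    from theI'[OF this] show "F q \<in> T" "a \<in> F q" "q \<in> F q" unfolding F_def by simp_all
  qed
  have "inj_on F G"
  proof (rule inj_onI)
    fix q q' assume "q \<in> G" "q' \<in> G" "F q = F q'"
    then show "q = q'" using eq_if_same_group[of "F q" q q'] F[of q] F[of q'] unfolding G_def by simp
  qed
  moreover have "F ` G = {b \<in> T. a \<in> b}"
  proof
    show "F ` G \<subseteq> {b \<in> T. a \<in> b}" using F by blast
    show "{b \<in> T. a \<in> b} \<subseteq> F ` G"
    proof
      fix b assume b: "b \<in> {b \<in> T. a \<in> b}"
      obtain q where q: "q \<in> b" "grp q = v"
        using grp_image_block[of b] b v by (metis imageE mem_Collect_eq)
      have qG: "q \<in> G" using q b block_subset unfolding G_def by blast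
      have "F q = b" using block_eq[of "F q" b a q] F[OF qG] b q v by simp
      then show "b \<in> F ` G" using qG by blast
    qed
  qed
  ultimately have "card {b \<in> T. a \<in> b} = card G" using card_image by fastforce
  then show ?thesis using card_group[OF v(1)] unfolding G_def by simp
qed

definition parallels :: "'a set \<Rightarrow> 'a set set" where
  "parallels b = {g \<in> T. g = b \<or> g \<inter> b = {}}"

lemma card_blocks_through_meeting:
  assumes b: "b \<in> T" and p: "p \<in> S" "p \<notin> b"
  shows "card {g \<in> T. p \<in> g \<and> g \<inter> b \<noteq> {}} = 2"
proof -
  obtain a where a: "a \<in> b" "grp a = grp p" by (rule block_meets_group[OF b p(1)])
  have "card (b - {a}) = 2" using card_block[OF b] a(1) by simp
  then obtain x y where xy: "b - {a} = {x, y}" "x \<noteq> y" by (meson card_2_iff)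
  have bxy: "x \<in> b" "y \<in> b" "x \<noteq> a" "y \<noteq> a" using xy by auto
  have grp_x: "grp x \<noteq> grp p" and grp_y: "grp y \<noteq> grp p" and grp_xy: "grp x \<noteq> grp y"
    using eq_if_same_group[OF b] bxy a xy(2) by metis+
  have xyS: "x \<in> S" "y \<in> S" using bxy block_subset[OF b] by auto
  obtain gx where gx: "gx \<in> T" "p \<in> gx" "x \<in> gx" by (rule block_through[OF p(1) xyS(1) grp_x[symmetric]])
  obtain gy where gy: "gy \<in> T" "p \<in> gy" "y \<in> gy" by (rule block_through[OF p(1) xyS(2) grp_y[symmetric]])
  have "gx \<noteq> gy"
  proof
    assume "gx = gy"
    then have "gx = b" using block_eq[OF gx(1) b gx(3) _ bxy(1) bxy(2) grp_xy] gy(3) by simp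
    then show False using gx(2) p(2) by simp
  qed
  have "{g \<in> T. p \<in> g \<and> g \<inter> b \<noteq> {}} = {gx, gy}"
  proof
    show "{gx, gy} \<subseteq> {g \<in> T. p \<in> g \<and> g \<inter> b \<noteq> {}}" using gx gy bxy by blast
    show "{g \<in> T. p \<in> g \<and> g \<inter> b \<noteq> {}} \<subseteq> {gx, gy}"
    proof
      fix g assume g: "g \<in> {g \<in> T. p \<in> g \<and> g \<inter> b \<noteq> {}}"
      then obtain z where z: "z \<in> g" "z \<in> b" by blast
      have "z \<noteq> a" using eq_if_same_group[of g z p] g z a p(2) by auto
      then have "z = x \<or> z = y" using xy z(2) by blast
      then show "g \<in> {gx, gy}"
        using block_eq[of g gx p x] block_eq[of g gy p y] g z gx gy grp_x grp_y by auto
    qed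
  qed
  then show ?thesis using \<open>gx \<noteq> gy\<close> by simp
qed

text \<open>Of the three blocks through a point outside b, two meet b, so exactly one is disjoint from b.\<close>

lemma unique_parallel_block:
  assumes b: "b \<in> T" and p: "p \<in> S"
  shows "\<exists>!g. g \<in> parallels b \<and> p \<in> g"
proof (cases "p \<in> b")
  case True
  then have "g \<in> parallels b \<and> p \<in> g \<longleftrightarrow> g = b" for g
    using b unfolding parallels_def by blast
  then show ?thesis by simp
next
  case False
  define M where "M = {g \<in> T. p \<in> g \<and> g \<inter> b \<noteq> {}}"
  define D where "D = {g \<in> parallels b. p \<in> g}"
  have "{g \<in> T. p \<in> g} = M \<union> D" and "M \<inter> D = {}"
    using False unfolding M_def D_def parallels_def by blast+
  moreover have "finite M" "finite D" using finite_blocks unfolding M_def D_def parallels_def by simp_all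
  ultimately have "card {g \<in> T. p \<in> g} = card M + card D" by (simp add: card_Un_disjoint)
  then have "card D = 1"
    using card_blocks_through[OF p] card_blocks_through_meeting[OF b p False] unfolding M_def by simp
  then obtain g0 where "D = {g0}" by (rule card_1_singletonE)
  then have "g \<in> parallels b \<and> p \<in> g \<longleftrightarrow> g = g0" for g
    unfolding D_def by blast
  then show ?thesis by simp
qed

lemma parallel_class_parallels: "b \<in> T \<Longrightarrow> parallel_class S T (parallels b)"
  unfolding parallel_class_def using unique_parallel_block parallels_def by auto

text \<open>The three blocks through a fixed point index the parallel classes.\<close>

lemma indexed_resolution_3: "\<exists>R. indexed_resolution S T {..<3::nat} R"
proof -
  have "S \<noteq> {}" using card_groups by auto
  then obtain a where a: "a \<in> S" by blast
  define K where "K = {g \<in> T. a \<in> g}"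
  have "indexed_resolution S T K parallels"
    unfolding indexed_resolution_def
  proof (intro conjI ballI)
    show "parallel_class S T (parallels g)" if "g \<in> K" for g
      using that parallel_class_parallels unfolding K_def by simp
    show "\<exists>!g. g \<in> K \<and> b \<in> parallels g" if b: "b \<in> T" for b
    proof -
      have "g \<in> K \<and> b \<in> parallels g \<longleftrightarrow> g \<in> parallels b \<and> a \<in> g" for g
        using b unfolding K_def parallels_def by blast
      then show ?thesis using unique_parallel_block[OF b a] by simp
    qed
  qed
  moreover have "finite K" "card K = 3"
    using finite_blocks card_blocks_through[OF a] unfolding K_def by simp_all
  then obtain \<sigma> where "bij_betw \<sigma> {..<3::nat} K"
    using finite_same_card_bij[of "{..<3::nat}" K] by auto
  ultimately show ?thesis using indexed_resolution_reindex by blast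
qed

end

section \<open>Zero-sum functions and the 3-rank\<close>

definition zero_block_sums :: "'a set set \<Rightarrow> ('a \<Rightarrow> 'b::comm_monoid_add) \<Rightarrow> bool" where
  "zero_block_sums B h \<longleftrightarrow> (\<forall>b\<in>B. sum h b = 0)"

lemma PiE_eq_restrict:
  assumes "x \<in> A \<rightarrow>\<^sub>E X" "\<And>a. a \<in> A \<Longrightarrow> x a = v a"
  shows "x = restrict v A"
proof -
  have "x = restrict x A" using assms(1) by (simp add: PiE_iff extensional_restrict)
  also have "\<dots> = restrict v A" using assms(2) by (rule restrict_ext)
  finally show ?thesis .
qed

lemma F3_indep_rows_iff:
  "F3_indep_rows P S \<longleftrightarrow>
     (\<forall>C :: 'a set \<Rightarrow> 3. (\<forall>p\<in>P. (\<Sum>b\<in>{b \<in> S. p \<in> b}. C b) = 0) \<longrightarrow> (\<forall>b\<in>S. C b = 0))"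
proof
  assume indep: "F3_indep_rows P S"
  show "\<forall>C :: 'a set \<Rightarrow> 3. (\<forall>p\<in>P. (\<Sum>b\<in>{b \<in> S. p \<in> b}. C b) = 0) \<longrightarrow> (\<forall>b\<in>S. C b = 0)"
  proof (intro allI impI)
    fix C :: "'a set \<Rightarrow> 3" assume C: "\<forall>p\<in>P. (\<Sum>b\<in>{b \<in> S. p \<in> b}. C b) = 0"
    define c where "c b = (SOME k. (of_int k :: 3) = C b)" for b
    have c: "of_int (c b) = C b" for b unfolding c_def by (rule someI_ex[OF surj_of_int_3])
    have "\<forall>p\<in>P. (\<Sum>b\<in>{b \<in> S. p \<in> b}. c b) mod 3 = 0"
      using C by (simp add: of_int_3_eq_0_iff[symmetric] c)
    then have "\<forall>b\<in>S. c b mod 3 = 0" using indep unfolding F3_indep_rows_def by blast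
    then show "\<forall>b\<in>S. C b = 0" by (simp add: of_int_3_eq_0_iff[symmetric] c)
  qed
next
  assume indep: "\<forall>C :: 'a set \<Rightarrow> 3. (\<forall>p\<in>P. (\<Sum>b\<in>{b \<in> S. p \<in> b}. C b) = 0) \<longrightarrow> (\<forall>b\<in>S. C b = 0)"
  show "F3_indep_rows P S"
    unfolding F3_indep_rows_def
  proof (intro allI impI)
    fix c :: "'a set \<Rightarrow> int" assume "\<forall>p\<in>P. (\<Sum>b\<in>{b \<in> S. p \<in> b}. c b) mod 3 = 0"
    then have "\<forall>p\<in>P. (\<Sum>b\<in>{b \<in> S. p \<in> b}. (of_int (c b) :: 3)) = 0"
      by (simp add: of_int_3_eq_0_iff[symmetric])
    then show "\<forall>b\<in>S. c b mod 3 = 0"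
      using indep[rule_format, of "\<lambda>b. of_int (c b)"] by (simp add: of_int_3_eq_0_iff)
  qed
qed

lemma sum_incidence_swap:
  fixes x :: "'a \<Rightarrow> 'r::comm_semiring_1"
  assumes "finite P" "finite S" "\<And>b. b \<in> S \<Longrightarrow> b \<subseteq> P"
  shows "(\<Sum>p\<in>P. x p * (\<Sum>b\<in>{b \<in> S. p \<in> b}. C b)) = (\<Sum>b\<in>S. C b * sum x b)"
proof -
  have "(\<Sum>p\<in>P. x p * (\<Sum>b\<in>{b \<in> S. p \<in> b}. C b)) = (\<Sum>p\<in>P. \<Sum>b\<in>S. if p \<in> b then x p * C b else 0)"
    using assms(2) by (simp add: sum_distrib_left sum.inter_filter if_distrib cong: if_cong)
  also have "\<dots> = (\<Sum>b\<in>S. \<Sum>p\<in>P. if p \<in> b then x p * C b else 0)"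
    by (rule sum.swap)
  also have "\<dots> = (\<Sum>b\<in>S. C b * sum x b)"
  proof (rule sum.cong[OF refl])
    fix b assume "b \<in> S"
    then have "{p \<in> P. p \<in> b} = b" using assms(3) by blast
    then have "(\<Sum>p\<in>P. if p \<in> b then x p * C b else 0) = (\<Sum>p\<in>b. x p * C b)"
      using sum.inter_filter[OF assms(1), of "\<lambda>p. x p * C b" "\<lambda>p. p \<in> b"] by simp
    then show "(\<Sum>p\<in>P. if p \<in> b then x p * C b else 0) = C b * sum x b"
      by (simp add: sum_distrib_left mult.commute)
  qed
  finally show ?thesis .
qed

text \<open>Functions orthogonal to a maximal independent set of rows are orthogonal to all rows:
  pair the function with a dependency among the rows in which the new row has nonzero weight.\<close>

lemma zero_block_sums_if_maximal_indep:
  fixes x :: "'a \<Rightarrow> 3"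
  assumes P: "finite P" and B: "finite B" "\<And>b. b \<in> B \<Longrightarrow> b \<subseteq> P"
    and S: "S \<subseteq> B" "F3_indep_rows P S"
    and maximal: "\<And>b. b \<in> B \<Longrightarrow> F3_indep_rows P (insert b S) \<Longrightarrow> b \<in> S"
    and x: "\<forall>b\<in>S. sum x b = 0"
  shows "zero_block_sums B x"
  unfolding zero_block_sums_def
proof
  fix b assume b: "b \<in> B"
  show "sum x b = 0"
  proof (cases "b \<in> S")
    case True
    then show ?thesis using x by blast
  next
    case False
    have fin: "finite S" using S(1) B(1) finite_subset by blast
    obtain C :: "'a set \<Rightarrow> 3" where C: "\<forall>p\<in>P. (\<Sum>b'\<in>{b' \<in> insert b S. p \<in> b'}. C b') = 0"
      and nz: "\<exists>b'\<in>insert b S. C b' \<noteq> 0"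
      using maximal[OF b] False unfolding F3_indep_rows_iff by blast
    have split: "(\<Sum>b'\<in>{b' \<in> insert b S. p \<in> b'}. C b') = (if p \<in> b then C b else 0) + (\<Sum>b'\<in>{b' \<in> S. p \<in> b'}. C b')"
      for p
    proof -
      have "{b' \<in> insert b S. p \<in> b'} = (if p \<in> b then insert b {b' \<in> S. p \<in> b'} else {b' \<in> S. p \<in> b'})"
        by auto
      then show ?thesis using False fin by simp
    qed
    have "C b \<noteq> 0"
    proof
      assume "C b = 0"
      then have "\<forall>p\<in>P. (\<Sum>b'\<in>{b' \<in> S. p \<in> b'}. C b') = 0" using C split by (simp cong: if_cong)
      then have "\<forall>b'\<in>S. C b' = 0" using S(2) unfolding F3_indep_rows_iff by blast
      then show False using nz \<open>C b = 0\<close> by blast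
    qed
    have "(\<Sum>b'\<in>insert b S. C b' * sum x b') = (\<Sum>p\<in>P. x p * (\<Sum>b'\<in>{b' \<in> insert b S. p \<in> b'}. C b'))"
      by (rule sum_incidence_swap[symmetric]) (use P fin S(1) B(2) b in auto)
    also have "\<dots> = 0" using C by simp
    finally have "C b * sum x b = 0" using x fin False by simp
    then show ?thesis using \<open>C b \<noteq> 0\<close> by (simp add: mult_eq_0_3)
  qed
qed

lemma rank3_attained:
  assumes "finite B"
  obtains S where "S \<subseteq> B" "F3_indep_rows P S" "card S = rank3 P B"
    and "\<And>S'. S' \<subseteq> B \<Longrightarrow> F3_indep_rows P S' \<Longrightarrow> card S' \<le> card S"
proof -
  define R where "R = {card S | S. S \<subseteq> B \<and> F3_indep_rows P S}"
  define m where "m = Max R"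
  have "finite R" unfolding R_def using assms by simp
  moreover have "F3_indep_rows P {}" unfolding F3_indep_rows_def by simp
  then have "R \<noteq> {}" unfolding R_def by blast
  ultimately have "m \<in> R" and max: "\<forall>r\<in>R. r \<le> m" unfolding m_def by simp_all
  then obtain S where S: "S \<subseteq> B" "F3_indep_rows P S" "card S = m" unfolding R_def by blast
  show ?thesis
  proof (rule that[OF S(1,2)])
    show "card S = rank3 P B" using S(3) unfolding rank3_def m_def R_def by simp
    show "card S' \<le> card S" if "S' \<subseteq> B" "F3_indep_rows P S'" for S'
      using max that S(3) unfolding R_def by blast
  qed
qed

lemma card_translates_le_card_zero_block_sums:
  fixes c :: "'a set \<Rightarrow> 3"
  assumes P: "finite P" and B: "finite B" "\<And>b. b \<in> B \<Longrightarrow> b \<subseteq> P"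
    and S: "S \<subseteq> B" "F3_indep_rows P S"
    and maximal: "\<And>b. b \<in> B \<Longrightarrow> F3_indep_rows P (insert b S) \<Longrightarrow> b \<in> S"
  shows "card {x \<in> P \<rightarrow>\<^sub>E UNIV. \<forall>b\<in>S. sum x b = c b}
           \<le> card {x \<in> P \<rightarrow>\<^sub>E (UNIV :: 3 set). zero_block_sums B x}"
proof (cases "{x \<in> P \<rightarrow>\<^sub>E UNIV. \<forall>b\<in>S. sum x b = c b} = {}")
  case False
  let ?F = "{x \<in> P \<rightarrow>\<^sub>E UNIV. \<forall>b\<in>S. sum x b = c b}"
    and ?N = "{x \<in> P \<rightarrow>\<^sub>E (UNIV :: 3 set). zero_block_sums B x}"
  obtain x0 where x0: "x0 \<in> ?F" using False by blast
  define d where "d x = restrict (\<lambda>p. x p - x0 p) P" for x :: "'a \<Rightarrow> 3"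
  have "d x \<in> ?N" if x: "x \<in> ?F" for x
  proof -
    have "sum (d x) b = 0" if "b \<in> S" for b
    proof -
      have "sum (d x) b = (\<Sum>p\<in>b. x p - x0 p)"
        using B(2) S(1) that unfolding d_def by (intro sum.cong) auto
      also have "\<dots> = c b - c b" using x x0 that by (simp add: sum_subtractf)
      finally show ?thesis by simp
    qed
    then show ?thesis
      using zero_block_sums_if_maximal_indep[OF P B S maximal] unfolding d_def by simp
  qed
  moreover have "inj_on d ?F"
  proof (rule inj_onI)
    fix x x' assume x: "x \<in> ?F" and x': "x' \<in> ?F" and eq: "d x = d x'"
    have "x a = x' a" if "a \<in> P" for a using fun_cong[OF eq, of a] that unfolding d_def by simp
    then have "x = restrict x' P" using x by (intro PiE_eq_restrict) auto
    also have "\<dots> = x'" using x' by (simp add: PiE_iff extensional_restrict)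
    finally show "x = x'" .
  qed
  moreover have "finite ?N" using P by (simp add: finite_PiE)
  ultimately show ?thesis by (intro card_inj_on_le) auto
qed (metis card.empty zero_le)

text \<open>The map sending x to its block sums over a maximal independent set S of blocks has at
  most 3 ^ card S values, and each of its fibres is a translate of a subset of the kernel.\<close>

lemma card_zero_block_sums:
  assumes P: "finite P" and B: "finite B" "\<And>b. b \<in> B \<Longrightarrow> b \<subseteq> P"
  shows "3 ^ card P \<le> 3 ^ rank3 P B * card {x \<in> P \<rightarrow>\<^sub>E (UNIV :: 3 set). zero_block_sums B x}"
proof -
  obtain S where S: "S \<subseteq> B" "F3_indep_rows P S" "card S = rank3 P B"
    and max: "\<And>S'. S' \<subseteq> B \<Longrightarrow> F3_indep_rows P S' \<Longrightarrow> card S' \<le> card S"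
    using rank3_attained[where P = P, OF B(1)] by blast
  have fin: "finite S" using S(1) B(1) finite_subset by blast
  have maximal: "b \<in> S" if "b \<in> B" "F3_indep_rows P (insert b S)" for b
    using max[of "insert b S"] that S(1) fin by (auto simp: card_insert_if split: if_splits)
  define X where "X = P \<rightarrow>\<^sub>E (UNIV :: 3 set)"
  define Y where "Y = S \<rightarrow>\<^sub>E (UNIV :: 3 set)"
  define N where "N = {x \<in> X. zero_block_sums B x}"
  define \<Phi> where "\<Phi> x = restrict (\<lambda>b. sum x b) S" for x :: "'a \<Rightarrow> 3"
  have fibre: "card {x \<in> X. \<Phi> x = y} \<le> card N" for y
  proof -
    have "{x \<in> X. \<Phi> x = y} \<subseteq> {x \<in> X. \<forall>b\<in>S. sum x b = y b}"
      unfolding \<Phi>_def by auto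
    then have "card {x \<in> X. \<Phi> x = y} \<le> card {x \<in> X. \<forall>b\<in>S. sum x b = y b}"
      using P unfolding X_def by (intro card_mono) (simp_all add: finite_PiE)
    also have "\<dots> \<le> card N"
      unfolding X_def N_def by (rule card_translates_le_card_zero_block_sums[OF P B S(1,2) maximal])
    finally show ?thesis .
  qed
  have "(\<Sum>y\<in>Y. card {x \<in> X. \<Phi> x = y}) \<le> card Y * card N"
    using sum_bounded_above[of Y, OF fibre] by simp
  moreover have "card X = (\<Sum>y\<in>Y. card {x \<in> X. \<Phi> x = y})"
    unfolding card_eq_sum
    by (rule sum.group[symmetric]) (auto simp: X_def Y_def \<Phi>_def P fin finite_PiE)
  ultimately show ?thesis
    unfolding X_def Y_def N_def using P fin S(3) by (simp add: card_PiE)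
qed

lemma independent_pair:
  fixes N :: "('a \<Rightarrow> 3) set"
  assumes N: "N \<subseteq> P \<rightarrow>\<^sub>E UNIV" and large: "9 < card N"
  obtains f g where "f \<in> N" "g \<in> N" "\<And>k l a. \<forall>p\<in>P. k * f p + l * g p = a \<Longrightarrow> k = 0 \<and> l = 0"
proof -
  define A where "A f = (\<lambda>(a, k). restrict (\<lambda>p. a + k * f p) P) ` (UNIV :: (3 \<times> 3) set)"
    for f :: "'a \<Rightarrow> 3"
  have outside: "\<exists>h\<in>N. h \<notin> A f" for f
  proof (rule ccontr)
    assume "\<not> ?thesis"
    then have "N \<subseteq> A f" by blast
    moreover have "card (A f) \<le> 9"
      unfolding A_def using card_image_le[of "UNIV :: (3 \<times> 3) set"] by simp
    ultimately show False using large card_mono[of "A f" N] unfolding A_def by fastforce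
  qed
  obtain f where f: "f \<in> N" "f \<notin> A (\<lambda>_. 0)" using outside by blast
  obtain g where g: "g \<in> N" "g \<notin> A f" using outside by blast
  have not_affine: "\<not> (\<forall>p\<in>P. h p = a + k * f' p)" if "h \<in> N" "h \<notin> A f'" for h f' a k
  proof
    assume "\<forall>p\<in>P. h p = a + k * f' p"
    then have "h = restrict (\<lambda>p. a + k * f' p) P" using N that(1) by (intro PiE_eq_restrict) auto
    then show False using that(2) unfolding A_def by auto
  qed
  have "k = 0 \<and> l = 0" if lin: "\<forall>p\<in>P. k * f p + l * g p = a" for k l a
  proof (cases "l = 0")
    case True
    have "k = 0"
    proof (rule ccontr)
      assume "k \<noteq> 0"
      have "f p = k * a" if "p \<in> P" for p
      proof -
        have "k * f p = a" using lin True that by simp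
        then have "k * k * f p = k * a" by (simp add: mult.assoc)
        then show ?thesis using mult_self_3[OF \<open>k \<noteq> 0\<close>] by simp
      qed
      then show False using not_affine[OF f, of "k * a" 0] by simp
    qed
    then show ?thesis using True by simp
  next
    case False
    have "\<forall>p\<in>P. g p = l * a + (- (l * k)) * f p"
    proof
      fix p assume "p \<in> P"
      then have "l * (k * f p + l * g p) = l * a" using lin by simp
      then have "l * k * f p + l * l * g p = l * a" by (simp add: algebra_simps)
      then have "l * k * f p + g p = l * a" using mult_self_3[OF False] by simp
      then have "g p = l * a - l * k * f p" by (simp add: eq_diff_eq add.commute)
      then show "g p = l * a + (- (l * k)) * f p" by simp
    qed
    then show ?thesis using not_affine[OF g] by blast
  qed
  then show ?thesis using that f(1) g(1) by blast
qed

locale steiner_triple_system =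
  fixes P :: "'a set" and B :: "'a set set"
  assumes STS: "STS P B"
begin

lemma finite_points: "finite P"
  using STS unfolding STS_def by blast

lemma block_subset: "b \<in> B \<Longrightarrow> b \<subseteq> P"
  using STS unfolding STS_def by blast

lemma card_block: "b \<in> B \<Longrightarrow> card b = 3"
  using STS unfolding STS_def by blast

lemma finite_blocks: "finite B"
  using finite_subset[of B "Pow P"] block_subset finite_points by blast

lemma ex1_block: "p \<in> P \<Longrightarrow> q \<in> P \<Longrightarrow> p \<noteq> q \<Longrightarrow> \<exists>!b. b \<in> B \<and> {p, q} \<subseteq> b"
  using STS unfolding STS_def by blast

definition block_of :: "'a \<Rightarrow> 'a \<Rightarrow> 'a set" where
  "block_of p q = (THE b. b \<in> B \<and> {p, q} \<subseteq> b)"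

lemma block_of:
  assumes "p \<in> P" "q \<in> P" "p \<noteq> q"
  shows "block_of p q \<in> B" "p \<in> block_of p q" "q \<in> block_of p q"
  using theI'[OF ex1_block[OF assms]] unfolding block_of_def by simp_all

lemma block_of_unique:
  assumes "b \<in> B" "p \<in> b" "q \<in> b" "p \<noteq> q"
  shows "b = block_of p q"
proof -
  have "p \<in> P" "q \<in> P" using assms block_subset by auto
  from ex1_block[OF this assms(4)] obtain c where "\<forall>c'. c' \<in> B \<and> {p, q} \<subseteq> c' \<longrightarrow> c' = c"
    by (elim ex1E) blast
  then show ?thesis using assms block_of[OF \<open>p \<in> P\<close> \<open>q \<in> P\<close> \<open>p \<noteq> q\<close>] by blast
qed

definition third :: "'a \<Rightarrow> 'a \<Rightarrow> 'a" where
  "third p q = (THE r. r \<in> block_of p q \<and> r \<noteq> p \<and> r \<noteq> q)"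

lemma third:
  assumes "p \<in> P" "q \<in> P" "p \<noteq> q"
  shows "block_of p q = {p, q, third p q}" "third p q \<noteq> p" "third p q \<noteq> q" "third p q \<in> P"
proof -
  have "card (block_of p q) = 3" using card_block block_of(1)[OF assms] by simp
  then obtain x y z where "block_of p q = {x, y, z}" "x \<noteq> y" "x \<noteq> z" "y \<noteq> z"
    by (meson card_3_iff)
  then obtain r where r: "block_of p q = {p, q, r}" "r \<noteq> p" "r \<noteq> q"
    using block_of(2,3)[OF assms] assms(3) by auto
  then have "\<exists>!r. r \<in> block_of p q \<and> r \<noteq> p \<and> r \<noteq> q" by auto
  then have "third p q = r" unfolding third_def using r by (simp add: the1_equality)
  then show "block_of p q = {p, q, third p q}" "third p q \<noteq> p" "third p q \<noteq> q"
    using r by simp_all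
  then show "third p q \<in> P" using block_subset[OF block_of(1)[OF assms]] by simp
qed

lemma zero_block_sums_third:
  fixes h :: "'a \<Rightarrow> 'b::ab_group_add"
  assumes "zero_block_sums B h" "p \<in> P" "q \<in> P" "p \<noteq> q"
  shows "h (third p q) = - (h p + h q)"
proof -
  have "sum h (block_of p q) = 0"
    using assms(1) block_of(1)[OF assms(2-4)] unfolding zero_block_sums_def by blast
  then have "h p + h q + h (third p q) = 0"
    using third[OF assms(2-4)] assms(4) by (simp add: add.assoc)
  then show ?thesis by (subst eq_neg_iff_add_eq_0) (simp add: ac_simps)
qed

lemma card_level_sets_mult_le:
  fixes h :: "'a \<Rightarrow> 3"
  assumes h: "zero_block_sums B h" and ab: "a \<noteq> b"
  shows "card {p \<in> P. h p = a} * card {p \<in> P. h p = b}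
           \<le> card {p \<in> P. h p = a} * card {p \<in> P. h p = - (a + b)}"
proof -
  let ?A = "{p \<in> P. h p = a}" and ?B = "{p \<in> P. h p = b}" and ?C = "{p \<in> P. h p = - (a + b)}"
  define F where "F = (\<lambda>(p, q). (p, third p q))"
  have ne: "p \<noteq> q" if "p \<in> ?A" "q \<in> ?B" for p q using that ab by auto
  have maps: "F ` (?A \<times> ?B) \<subseteq> ?A \<times> ?C"
    using third(4) zero_block_sums_third[OF h] ne unfolding F_def by auto
  have inj: "inj_on F (?A \<times> ?B)"
  proof (rule inj_onI)
    fix x y assume x: "x \<in> ?A \<times> ?B" and y: "y \<in> ?A \<times> ?B" and eq: "F x = F y"
    obtain p q where x_eq: "x = (p, q)" by (cases x)
    obtain p' q' where y_eq: "y = (p', q')" by (cases y)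
    have p': "p' = p" and r_eq: "third p q = third p q'"
      using eq unfolding F_def x_eq y_eq by auto
    let ?r = "third p q"
    have pq: "p \<in> P" "q \<in> P" "q' \<in> P" "p \<noteq> q" "p \<noteq> q'"
      using x y ne unfolding x_eq y_eq p' by auto
    have "block_of p q = block_of p ?r"
      using block_of_unique[OF block_of(1)[OF pq(1,2,4)] block_of(2)[OF pq(1,2,4)]] third[OF pq(1,2,4)]
      by simp
    moreover have "block_of p q' = block_of p ?r"
      using block_of_unique[OF block_of(1)[OF pq(1,3,5)] block_of(2)[OF pq(1,3,5)]] third[OF pq(1,3,5)] r_eq
      by simp
    ultimately have q': "q' \<in> {p, q, ?r}" using block_of(3)[OF pq(1,3,5)] third(1)[OF pq(1,2,4)] by simp
    have hp: "h p = a" and hq: "h q = b" "h q' = b" using x y unfolding x_eq y_eq p' by auto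
    then have "h ?r = - (a + b)" using zero_block_sums_third[OF h pq(1,2,4)] by simp
    then have "h ?r \<noteq> b" "h p \<noteq> b" using minus_add_neq_3[OF ab] ab hp by simp_all
    with q' hq have "q' = q" by auto
    then show "x = y" unfolding x_eq y_eq p' by simp
  qed
  have "card (?A \<times> ?B) \<le> card (?A \<times> ?C)"
    using card_inj_on_le[OF inj maps] finite_points by simp
  then show ?thesis by (simp add: card_cartesian_product)
qed

lemma card_level_set:
  fixes h :: "'a \<Rightarrow> 3"
  assumes h: "zero_block_sums B h" and pq: "p \<in> P" "q \<in> P" "h p \<noteq> h q"
  shows "3 * card {x \<in> P. h x = e} = card P"
proof -
  let ?n = "\<lambda>e. card {x \<in> P. h x = e}"
  define a b where "a = h p" and "b = h q"
  have ab: "a \<noteq> b" using pq unfolding a_def b_def by simp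
  have pos: "?n a > 0" "?n b > 0"
    using pq finite_points unfolding a_def b_def by (auto simp: card_gt_0_iff)
  have swap: "?n a * ?n b = ?n a * ?n (- (a + b))" if "a \<noteq> b" for a b
  proof (rule antisym)
    show "?n a * ?n b \<le> ?n a * ?n (- (a + b))" by (rule card_level_sets_mult_le[OF h that])
    have "a \<noteq> - (a + b)" by (metis minus_add_neq_3[OF that])
    from card_level_sets_mult_le[OF h this] show "?n a * ?n (- (a + b)) \<le> ?n a * ?n b"
      by simp
  qed
  have "?n b = ?n (- (a + b))" "?n a = ?n (- (a + b))"
    using swap[OF ab] swap[OF ab[symmetric]] pos by (simp_all add: add.commute)
  then have all: "?n x = ?n a" for x
    using eq_or_eq_or_minus_add_3[OF ab, of x] by auto
  have "P = {x \<in> P. h x = 0} \<union> {x \<in> P. h x = 1} \<union> {x \<in> P. h x = 2}"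
    using exhaust_3 by blast
  moreover have "card ({x \<in> P. h x = 0} \<union> {x \<in> P. h x = 1} \<union> {x \<in> P. h x = 2}) = ?n 0 + ?n 1 + ?n 2"
    using finite_points by (subst card_Un_disjoint; auto)+
  ultimately have "card P = ?n 0 + ?n 1 + ?n 2" by simp
  then show ?thesis using all[of 0] all[of 1] all[of 2] all[of e] by simp
qed

end

section \<open>Coordinates from two independent zero-sum functions\<close>

locale sts_coordinates = steiner_triple_system +
  fixes f g :: "'a \<Rightarrow> 3"
  assumes zero_block_sums_f: "zero_block_sums B f"
    and zero_block_sums_g: "zero_block_sums B g"
    and independent: "\<And>k l a. \<forall>p\<in>P. k * f p + l * g p = a \<Longrightarrow> k = 0 \<and> l = 0"
begin

definition coord :: "'a \<Rightarrow> 3 \<times> 3" where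
  "coord p = (f p, g p)"

definition fibre :: "3 \<times> 3 \<Rightarrow> 'a set" where
  "fibre u = {p \<in> P. coord p = u}"

definition line :: "3 \<times> 3 \<Rightarrow> 3 \<Rightarrow> 'a set" where
  "line d c = {p \<in> P. lin_form d (coord p) = c}"

lemma zero_block_sums_lin_form: "zero_block_sums B (\<lambda>p. lin_form d (coord p))"
  using zero_block_sums_f zero_block_sums_g
  unfolding zero_block_sums_def lin_form_def coord_def
  by (simp add: sum.distrib sum_distrib_left[symmetric])

lemma lin_form_nonconstant:
  assumes "d \<in> directions"
  obtains p q where "p \<in> P" "q \<in> P" "lin_form d (coord p) \<noteq> lin_form d (coord q)"
proof -
  have "P \<noteq> {}" using independent[of 1 0 0] by auto
  then obtain p where p: "p \<in> P" by blast
  have "\<not> (\<forall>q\<in>P. fst d * f q + snd d * g q = lin_form d (coord p))"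
    using independent directions_nonzero[OF assms] by (metis prod.collapse)
  then obtain q where "q \<in> P" "lin_form d (coord q) \<noteq> lin_form d (coord p)"
    unfolding lin_form_def coord_def by auto
  then show ?thesis using that p by metis
qed

lemma card_line: "d \<in> directions \<Longrightarrow> 3 * card (line d c) = card P"
  unfolding line_def
  by (rule lin_form_nonconstant, assumption) (rule card_level_set[OF zero_block_sums_lin_form])

text \<open>Count incidences between points and the four lines through u: a point of the fibre over u
  lies on all four of them, any other point on exactly one.\<close>

lemma card_fibre: "9 * card (fibre u) = card P"
proof -
  have "3 * (\<Sum>d\<in>directions. card (line d (lin_form d u))) = (\<Sum>d\<in>directions. card P)"
    by (simp add: sum_distrib_left card_line)
  also have "\<dots> = 4 * card P" unfolding sum_directions by simp
  finally have lhs: "3 * (\<Sum>d\<in>directions. card (line d (lin_form d u))) = 4 * card P" .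
  have "(\<Sum>d\<in>directions. card (line d (lin_form d u)))
      = (\<Sum>d\<in>directions. \<Sum>p\<in>P. if lin_form d (coord p) = lin_form d u then 1 else 0)"
    unfolding line_def using finite_points by (simp add: card_filter_eq_sum)
  also have "\<dots> = (\<Sum>p\<in>P. \<Sum>d\<in>directions. if lin_form d (coord p) = lin_form d u then 1 else 0)"
    by (rule sum.swap)
  also have "\<dots> = (\<Sum>p\<in>P. 1 + (if coord p = u then 3 else 0))"
  proof (rule sum.cong[OF refl])
    fix p
    have "(\<Sum>d\<in>directions. if lin_form d (coord p) = lin_form d u then 1 else 0)
        = card {d \<in> directions. lin_form d (coord p) = lin_form d u}"
      using finite_directions by (simp add: card_filter_eq_sum)
    then show "(\<Sum>d\<in>directions. if lin_form d (coord p) = lin_form d u then 1 else 0)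
        = 1 + (if coord p = u then 3 else 0 :: nat)"
      using card_directions_agree[of "coord p" u] by simp
  qed
  also have "\<dots> = card P + 3 * card (fibre u)"
    unfolding fibre_def sum.distrib using finite_points
    by (simp add: card_filter_eq_sum sum_distrib_left if_distrib cong: if_cong)
  finally show ?thesis using lhs by simp
qed

lemma coord_third:
  assumes "p \<in> P" "q \<in> P" "p \<noteq> q" "coord p = coord q"
  shows "coord (third p q) = coord p"
proof -
  have q: "f q = f p" "g q = g p" using assms(4) unfolding coord_def by simp_all
  have "f (third p q) = - (f p + f p)" "g (third p q) = - (g p + g p)"
    using zero_block_sums_third[OF zero_block_sums_f assms(1-3)]
      zero_block_sums_third[OF zero_block_sums_g assms(1-3)] q by simp_all
  then show ?thesis unfolding coord_def by (simp only: minus_add_self_3)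
qed

end

locale sts27_coordinates = sts_coordinates +
  assumes card_points: "card P = 27"
begin

lemma card_fibre_3: "card (fibre u) = 3"
  using card_fibre[of u] card_points by simp

lemma block_of_eq_fibre:
  assumes "p \<in> P" "q \<in> P" "p \<noteq> q" "coord p = coord q"
  shows "block_of p q = fibre (coord p)"
proof -
  have "block_of p q \<subseteq> fibre (coord p)"
    using third[OF assms(1-3)] coord_third[OF assms] assms unfolding fibre_def by auto
  moreover have "finite (fibre (coord p))" using finite_points unfolding fibre_def by simp
  ultimately show ?thesis
    using card_subset_eq card_fibre_3 card_block[OF block_of(1)[OF assms(1-3)]] by metis
qed

lemma fibre_in_blocks: "fibre u \<in> B"
proof -
  obtain x y z where "fibre u = {x, y, z}" "x \<noteq> y"
    using card_fibre_3[of u] by (meson card_3_iff)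
  then have "x \<in> P" "y \<in> P" "coord x = u" "coord y = u" "x \<noteq> y" unfolding fibre_def by auto
  then show ?thesis using block_of_eq_fibre block_of(1) by metis
qed

lemma inj_on_coord_block:
  assumes "b \<in> B" "b \<notin> range fibre"
  shows "inj_on coord b"
proof (rule inj_onI, rule ccontr)
  fix x y assume xy: "x \<in> b" "y \<in> b" "coord x = coord y" "x \<noteq> y"
  have "x \<in> P" "y \<in> P" using xy block_subset[OF assms(1)] by auto
  then have "b = fibre (coord x)"
    using block_of_unique[OF assms(1) xy(1,2,4)] block_of_eq_fibre xy(3,4) by simp
  then show False using assms(2) by simp
qed

lemma card_line_9: "d \<in> directions \<Longrightarrow> card (line d c) = 9"
  using card_line[of d c] card_points by simp

definition transversals :: "3 \<times> 3 \<Rightarrow> 3 \<Rightarrow> 'a set set" where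
  "transversals d c = {b \<in> B. b \<subseteq> line d c \<and> b \<notin> range fibre}"

lemma transversal_design_line:
  assumes d: "d \<in> directions"
  shows "transversal_design_3_3 (line d c) coord (transversals d c)"
proof
  show fin: "finite (line d c)" using finite_points unfolding line_def by simp
  have groups: "{p \<in> line d c. coord p = v} = fibre v" if "v \<in> coord ` line d c" for v
    using that unfolding line_def fibre_def by auto
  then show "card {p \<in> line d c. coord p = v} = 3" if "v \<in> coord ` line d c" for v
    using that card_fibre_3 by simp
  have "card (line d c) = (\<Sum>v\<in>coord ` line d c. card {p \<in> line d c. coord p = v})"
    unfolding card_eq_sum by (rule sum.group[OF fin finite_imageI[OF fin] subset_refl, symmetric])
  also have "\<dots> = 3 * card (coord ` line d c)" using groups card_fibre_3 by simp
  finally show "card (coord ` line d c) = 3" using card_line_9[OF d] by simp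
  show "b \<subseteq> line d c" "card b = 3" "inj_on coord b" if "b \<in> transversals d c" for b
    using that card_block inj_on_coord_block unfolding transversals_def by auto
  show "\<exists>!b. b \<in> transversals d c \<and> p \<in> b \<and> q \<in> b"
    if pq: "p \<in> line d c" "q \<in> line d c" "coord p \<noteq> coord q" for p q
  proof -
    have p: "p \<in> P" "q \<in> P" "p \<noteq> q" using pq unfolding line_def by auto
    have "lin_form d (coord (third p q)) = c"
      using zero_block_sums_third[OF zero_block_sums_lin_form p] pq minus_add_self_3
      unfolding line_def by simp
    then have "block_of p q \<subseteq> line d c"
      using third[OF p] third(4)[OF p] pq unfolding line_def by auto
    moreover have "block_of p q \<notin> range fibre"
      using block_of(2,3)[OF p] pq(3) unfolding fibre_def by auto
    ultimately have mem: "block_of p q \<in> transversals d c"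
      using block_of(1)[OF p] unfolding transversals_def by simp
    have uniq: "b = block_of p q" if "b \<in> transversals d c" "p \<in> b" "q \<in> b" for b
    proof -
      have "b \<in> B" using that(1) unfolding transversals_def by simp
      then show ?thesis by (rule block_of_unique[OF _ that(2,3) p(3)])
    qed
    show ?thesis
    proof (rule ex1I[of _ "block_of p q"])
      show "block_of p q \<in> transversals d c \<and> p \<in> block_of p q \<and> q \<in> block_of p q"
        using mem block_of(2,3)[OF p] by simp
    qed (use uniq in blast)
  qed
qed

lemma nonfibre_block_in_line:
  assumes b: "b \<in> B" "b \<notin> range fibre"
  obtains d c where "d \<in> directions" "b \<subseteq> line d c"
proof -
  obtain x y z where xyz: "b = {x, y, z}" "x \<noteq> y" "x \<noteq> z" "y \<noteq> z"
    using card_block[OF b(1)] by (meson card_3_iff)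
  have P: "x \<in> P" "y \<in> P" using xyz block_subset[OF b(1)] by auto
  have "coord x \<noteq> coord y" using inj_on_coord_block[OF b] xyz unfolding inj_on_def by auto
  then obtain d where d: "d \<in> directions" "lin_form d (coord x) = lin_form d (coord y)"
    using ex1_direction_agree by blast
  have "third x y = z" using third[OF P xyz(2)] block_of_unique[OF b(1), of x y] xyz by auto
  then have "lin_form d (coord z) = lin_form d (coord x)"
    using zero_block_sums_third[OF zero_block_sums_lin_form P xyz(2)] d(2) minus_add_self_3 by simp
  then have "b \<subseteq> line d (lin_form d (coord x))"
    using xyz(1) block_subset[OF b(1)] d(2) unfolding line_def by auto
  then show ?thesis using that d(1) by blast
qed

lemma direction_unique:
  assumes b: "b \<in> B" "b \<notin> range fibre"
    and d: "d \<in> directions" "b \<subseteq> line d c" and d': "d' \<in> directions" "b \<subseteq> line d' c'"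
  shows "d = d'"
proof -
  obtain x y where xy: "x \<in> b" "y \<in> b" "x \<noteq> y"
    using card_block[OF b(1)] by (metis card_2_iff' card_3_iff insertI1 insertI2 insert_commute)
  have "coord x \<noteq> coord y" using inj_on_coord_block[OF b] xy unfolding inj_on_def by auto
  moreover have "lin_form d (coord x) = lin_form d (coord y)" "lin_form d' (coord x) = lin_form d' (coord y)"
    using d d' xy unfolding line_def by auto
  ultimately show ?thesis using ex1_direction_agree d(1) d'(1) by blast
qed

lemma blocks_eq: "B = range fibre \<union> (\<Union>d\<in>directions. \<Union>c. transversals d c)"
proof
  show "B \<subseteq> range fibre \<union> (\<Union>d\<in>directions. \<Union>c. transversals d c)"
  proof
    fix b assume b: "b \<in> B"
    show "b \<in> range fibre \<union> (\<Union>d\<in>directions. \<Union>c. transversals d c)"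
    proof (cases "b \<in> range fibre")
      case False
      then obtain d c where "d \<in> directions" "b \<subseteq> line d c" by (rule nonfibre_block_in_line[OF b])
      then show ?thesis using b False unfolding transversals_def by blast
    qed simp
  qed
  show "range fibre \<union> (\<Union>d\<in>directions. \<Union>c. transversals d c) \<subseteq> B"
    using fibre_in_blocks unfolding transversals_def by blast
qed

lemma resolvable_fibres: "resolvable P (range fibre)"
  unfolding resolvable_def
proof (intro exI[of _ "{range fibre}"] conjI ballI)
  show "parallel_class P (range fibre) C" if "C \<in> {range fibre}" for C
    unfolding parallel_class_def
  proof (intro conjI ballI)
    show "C \<subseteq> range fibre" using that by simp
    fix p assume p: "p \<in> P"
    have "c \<in> C \<and> p \<in> c \<longleftrightarrow> c = fibre (coord p)" for c
      using that p unfolding fibre_def by auto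
    then show "\<exists>!c. c \<in> C \<and> p \<in> c" by simp
  qed
  show "\<exists>!C. C \<in> {range fibre} \<and> b \<in> C" if "b \<in> range fibre" for b
  proof -
    have "C \<in> {range fibre} \<and> b \<in> C \<longleftrightarrow> C = range fibre" for C using that by blast
    then show ?thesis by simp
  qed
qed

lemma resolvable_transversals:
  assumes d: "d \<in> directions"
  shows "resolvable P (\<Union>c. transversals d c)"
proof -
  have "\<forall>c. \<exists>R. indexed_resolution (line d c) (transversals d c) {..<3::nat} R"
    using transversal_design_3_3.indexed_resolution_3[OF transversal_design_line[OF d]] by blast
  then obtain R where R: "\<And>c. indexed_resolution (line d c) (transversals d c) {..<3::nat} (R c)"
    by metis
  have "indexed_resolution (\<Union>c. line d c) (\<Union>c. transversals d c) {..<3::nat} (\<lambda>k. \<Union>c. R c k)"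
  proof (rule indexed_resolution_UN)
    show "disjoint_family_on (line d) UNIV" unfolding disjoint_family_on_def line_def by blast
    show "b \<noteq> {} \<and> b \<subseteq> line d c" if "b \<in> transversals d c" for c b
      using that card_block unfolding transversals_def by fastforce
  qed (rule R)
  moreover have "(\<Union>c. line d c) = P" unfolding line_def by blast
  ultimately show ?thesis by (metis indexed_resolution_imp_resolvable)
qed

lemma resolvable: "resolvable P B"
proof -
  have "resolvable P (\<Union>d\<in>directions. \<Union>c. transversals d c)"
  proof (rule resolvable_UN)
    show "disjoint_family_on (\<lambda>d. \<Union>c. transversals d c) directions"
      unfolding disjoint_family_on_def transversals_def using direction_unique by blast
  qed (rule resolvable_transversals)
  moreover have "range fibre \<inter> (\<Union>d\<in>directions. \<Union>c. transversals d c) = {}"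
    unfolding transversals_def by blast
  ultimately show ?thesis
    using resolvable_Un[OF _ resolvable_fibres] blocks_eq by metis
qed

end

theorem proposition3p3:
  fixes P :: "'a set" and B :: "'a set set"
  assumes "STS P B" and "card P = 27" and "rank3 P B \<le> 24"
  shows "resolvable P B"
proof -
  interpret steiner_triple_system P B by (rule steiner_triple_system.intro) (rule assms(1))
  define N where "N = {x \<in> P \<rightarrow>\<^sub>E (UNIV :: 3 set). zero_block_sums B x}"
  have "3 ^ 27 \<le> (3::nat) ^ rank3 P B * card N"
    using card_zero_block_sums[OF finite_points finite_blocks block_subset] assms(2) unfolding N_def by simp
  also have "\<dots> \<le> 3 ^ 24 * card N" using assms(3) by (intro mult_right_mono power_increasing) simp_all
  finally have "3 ^ 24 * 27 \<le> (3::nat) ^ 24 * card N" by simp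
  then have "9 < card N" using nat_mult_le_cancel1[of "3 ^ 24" 27 "card N"] by simp
  then obtain f g where "f \<in> N" "g \<in> N"
    and indep: "\<And>k l a. \<forall>p\<in>P. k * f p + l * g p = a \<Longrightarrow> k = 0 \<and> l = 0"
    using independent_pair[of N P] unfolding N_def by blast
  then have "zero_block_sums B f" "zero_block_sums B g" unfolding N_def by simp_all
  then interpret sts27_coordinates P B f g
    by unfold_locales (use assms(1,2) indep in blast)+
  show ?thesis by (rule resolvable)
qed

end
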